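(* Fix a user association $\mathbf x=(x_{ij})$ with $x_{ij}\in\{0,1\}$ and $\sum_{i\in\mathcal I}x_{ij}=1$ for every $j\in\mathcal J$. Consider the load distribution and power control problem \[ \max_{\mathbf d,\mathbf p}\ \sum_{i\in\mathcal I}\sum_{j\in\mathcal J}\omega_j x_{ij}\log_2\!\left(d_i\log_2\!\left(1+\frac{p_i g_{ij}}{\sum_{k\in\mathcal I\setminus\{i\}}d_k p_k g_{kj}+\sigma^2}\right)\right)+C \] subject to $0\le d_i\le 1$ and $0\le p_i\le P_i$ for all $i\in\mathcal I$, where $C=\sum_{i\in\mathcal I}\sum_{j\in\mathcal J}\omega_j x_{ij}\log_2\!\big(KB\omega_j/\sum_{l\in\mathcal J}\omega_l x_{il}\big)$ is a constant, terms with $x_{ij}=0$ are taken to be $0$, and it is assumed that if either of $p_i$ and $d_i$ is $0$ then the other is $0$ as well. Then for each $i\in\mathcal I$, the optimal load satisfies $d_i^*=1$ if there exists at least one user $j$ with $x_{ij}=1$, and $d_i^*=0$ otherwise.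
   Context: $\mathcal I=\{1,\dots,I\}$ is the set of base stations and $\mathcal J=\{1,\dots,J\}$ the set of users; $x_{ij}=1$ means user $j$ is associated with base station $i$. $d_i$ is the load and $p_i$ the per-resource-block transmit power of base station $i$, with maximum power $P_i>0$. Constants $K,B>0$, channel gains $g_{ij}>0$, noise power $\sigma^2>0$ and user priorities $\omega_j>0$ are given. *)

theory Defs
  imports "HOL-Analysis.Analysis" "HOL-Library.Extended_Real"
begin

text \<open>Base stations are indexed by {1..nI}, users by {1..nJ}.
  x i j is the association indicator, d i the load, p i the per-RB power.\<close>

definition user_assoc :: "nat \<Rightarrow> nat \<Rightarrow> (nat \<Rightarrow> nat \<Rightarrow> real) \<Rightarrow> bool" where
  "user_assoc nI nJ x \<longleftrightarrow>
     (\<forall>i\<in>{1..nI}. \<forall>j\<in>{1..nJ}. x i j = 0 \<or> x i j = 1) \<and>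
     (\<forall>j\<in>{1..nJ}. (\<Sum>i\<in>{1..nI}. x i j) = 1)"

definition sinr :: "nat \<Rightarrow> (nat \<Rightarrow> nat \<Rightarrow> real) \<Rightarrow> real \<Rightarrow> (nat \<Rightarrow> real) \<Rightarrow> (nat \<Rightarrow> real)
                    \<Rightarrow> nat \<Rightarrow> nat \<Rightarrow> real" where
  "sinr nI g sigma2 d p i j =
     p i * g i j / ((\<Sum>k\<in>{1..nI} - {i}. d k * p k * g k j) + sigma2)"

definition rate_arg :: "nat \<Rightarrow> (nat \<Rightarrow> nat \<Rightarrow> real) \<Rightarrow> real \<Rightarrow> (nat \<Rightarrow> real) \<Rightarrow> (nat \<Rightarrow> real)
                    \<Rightarrow> nat \<Rightarrow> nat \<Rightarrow> real" where
  "rate_arg nI g sigma2 d p i j = d i * log 2 (1 + sinr nI g sigma2 d p i j)"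

definition const_C :: "nat \<Rightarrow> nat \<Rightarrow> (nat \<Rightarrow> nat \<Rightarrow> real) \<Rightarrow> real \<Rightarrow> real \<Rightarrow> (nat \<Rightarrow> real) \<Rightarrow> real" where
  "const_C nI nJ x K B \<omega> =
     (\<Sum>i\<in>{1..nI}. \<Sum>j\<in>{1..nJ}. if x i j = 0 then 0 else
        \<omega> j * x i j * log 2 (K * B * \<omega> j / (\<Sum>l\<in>{1..nJ}. \<omega> l * x i l)))"

text \<open>Objective as an extended real: log2 of a nonpositive argument in a term with
  x_ij = 1 is -infinity (log2 0 = -infinity), which makes the whole sum -infinity.\<close>
definition objective ::
  "nat \<Rightarrow> nat \<Rightarrow> (nat \<Rightarrow> nat \<Rightarrow> real) \<Rightarrow> real \<Rightarrow> real \<Rightarrow> (nat \<Rightarrow> nat \<Rightarrow> real) \<Rightarrow> real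
   \<Rightarrow> (nat \<Rightarrow> real) \<Rightarrow> (nat \<Rightarrow> real) \<Rightarrow> (nat \<Rightarrow> real) \<Rightarrow> ereal" where
  "objective nI nJ x K B g sigma2 \<omega> d p =
     (if (\<exists>i\<in>{1..nI}. \<exists>j\<in>{1..nJ}. x i j \<noteq> 0 \<and> rate_arg nI g sigma2 d p i j \<le> 0)
      then -\<infinity>
      else ereal ((\<Sum>i\<in>{1..nI}. \<Sum>j\<in>{1..nJ}. if x i j = 0 then 0 else
                     \<omega> j * x i j * log 2 (rate_arg nI g sigma2 d p i j))
                  + const_C nI nJ x K B \<omega>))"

definition feasible :: "nat \<Rightarrow> (nat \<Rightarrow> real) \<Rightarrow> (nat \<Rightarrow> real) \<Rightarrow> (nat \<Rightarrow> real) \<Rightarrow> bool" where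
  "feasible nI P d p \<longleftrightarrow>
     (\<forall>i\<in>{1..nI}. 0 \<le> d i \<and> d i \<le> 1 \<and> 0 \<le> p i \<and> p i \<le> P i \<and> (p i = 0 \<longleftrightarrow> d i = 0))"

definition optimal ::
  "nat \<Rightarrow> nat \<Rightarrow> (nat \<Rightarrow> nat \<Rightarrow> real) \<Rightarrow> real \<Rightarrow> real \<Rightarrow> (nat \<Rightarrow> nat \<Rightarrow> real) \<Rightarrow> real
   \<Rightarrow> (nat \<Rightarrow> real) \<Rightarrow> (nat \<Rightarrow> real) \<Rightarrow> (nat \<Rightarrow> real) \<Rightarrow> (nat \<Rightarrow> real) \<Rightarrow> bool" where
  "optimal nI nJ x K B g sigma2 \<omega> P d p \<longleftrightarrow>
     feasible nI P d p \<and>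
     (\<forall>d' p'. feasible nI P d' p' \<longrightarrow>
        objective nI nJ x K B g sigma2 \<omega> d' p' \<le> objective nI nJ x K B g sigma2 \<omega> d p)"

end

theory Submission
  imports Defs
begin

text \<open>If a base station serves someone at load \<open>d\<^sub>i < 1\<close>, let it run at full load
  with power \<open>d\<^sub>i p\<^sub>i\<close> instead: the interference \<open>d\<^sub>i p\<^sub>i g\<^sub>i\<^sub>j\<close> it causes is unchanged,
  while its users' rate argument grows from \<open>d\<^sub>i log(1 + s)\<close> to \<open>log(1 + d\<^sub>i s)\<close> by strict
  concavity of the logarithm. A base station serving nobody only causes interference, so
  switching it off strictly improves every served user. Either way the objective strictly
  increases (the constant \<open>C\<close> cancels), contradicting optimality. These comparisons are
  between finite values: full load at full power is feasible with all rates positive, so the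
  optimum has finite objective, i.e. positive rates for all served users.\<close>

lemma ln_one_plus_scaled_gt:
  fixes c s :: real
  assumes c: "0 < c" "c < 1" and s: "0 < s"
  shows "c * ln (1 + s) < ln (1 + c * s)"
proof -
  let ?f = "\<lambda>t. ln (1 + c * t) - c * ln (1 + t)"
  have "?f 0 < ?f s"
  proof (rule DERIV_pos_imp_increasing_open[OF s])
    fix t :: real assume t: "0 < t" "t < s"
    have ct: "0 < 1 + c * t" "1 + c * t < 1 + t"
      using c t by (simp_all add: add_pos_pos)
    have "DERIV ?f t :> c / (1 + c * t) - c / (1 + t)"
      using ct t by (auto intro!: derivative_eq_intros simp: field_simps)
    moreover have "c / (1 + t) < c / (1 + c * t)"
      using ct c by (intro divide_strict_left_mono) auto
    ultimately show "\<exists>y. DERIV ?f t :> y \<and> 0 < y"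
      by auto
  next
    have "0 < 1 + c * t \<and> 0 < 1 + t" if "t \<in> {0..s}" for t
      using that c by (auto simp: add_pos_nonneg)
    then show "continuous_on {0..s} ?f"
      by (intro continuous_intros) force+
  qed
  then show ?thesis
    by simp
qed

lemma log_one_plus_scaled_gt:
  fixes b c s :: real
  assumes "1 < b" "0 < c" "c < 1" "0 < s"
  shows "c * log b (1 + s) < log b (1 + c * s)"
  using ln_one_plus_scaled_gt[OF assms(2-4)] assms(1)
  by (simp add: log_def divide_strict_right_mono)

definition interference ::
  "nat \<Rightarrow> (nat \<Rightarrow> nat \<Rightarrow> real) \<Rightarrow> (nat \<Rightarrow> real) \<Rightarrow> (nat \<Rightarrow> real) \<Rightarrow> nat \<Rightarrow> nat \<Rightarrow> real" where
  "interference nI g d p i j = (\<Sum>k\<in>{1..nI} - {i}. d k * p k * g k j)"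

lemma sinr_interference:
  "sinr nI g sigma2 d p i j = p i * g i j / (interference nI g d p i j + sigma2)"
  unfolding sinr_def interference_def ..

lemma interference_nonneg:
  assumes "\<And>k. k \<in> {1..nI} \<Longrightarrow> 0 \<le> d k \<and> 0 \<le> p k \<and> 0 \<le> g k j"
  shows "0 \<le> interference nI g d p i j"
  unfolding interference_def using assms by (intro sum_nonneg) auto

lemma interference_cong:
  assumes "\<And>k. k \<in> {1..nI} \<Longrightarrow> d' k * p' k = d k * p k"
  shows "interference nI g d' p' i j = interference nI g d p i j"
  unfolding interference_def using assms by (intro sum.cong) auto

lemma interference_switch_off:
  assumes "l \<in> {1..nI}" "l \<noteq> i"
  shows "interference nI g (d(l := 0)) (p(l := 0)) i j
           = interference nI g d p i j - d l * p l * g l j"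
proof -
  have l: "l \<in> {1..nI} - {i}"
    using assms by simp
  have "interference nI g d p i j = d l * p l * g l j + (\<Sum>k\<in>{1..nI} - {i} - {l}. d k * p k * g k j)"
    unfolding interference_def by (rule sum.remove[OF _ l]) simp
  moreover have "interference nI g (d(l := 0)) (p(l := 0)) i j = (\<Sum>k\<in>{1..nI} - {i} - {l}. d k * p k * g k j)"
    unfolding interference_def by (subst sum.remove[OF _ l]) (auto intro!: sum.cong)
  ultimately show ?thesis
    by simp
qed

lemma feasible_update:
  assumes "feasible nI P d p" and "0 \<le> a" "a \<le> 1" "0 \<le> b" "b \<le> P i" "b = 0 \<longleftrightarrow> a = 0"
  shows "feasible nI P (d(i := a)) (p(i := b))"
  using assms unfolding feasible_def by auto

locale load_power_problem =
  fixes nI nJ :: nat and x g :: "nat \<Rightarrow> nat \<Rightarrow> real" and K B sigma2 :: real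
    and \<omega> P :: "nat \<Rightarrow> real"
  assumes sigma2_pos: "0 < sigma2"
    and P_pos: "\<And>i. i \<in> {1..nI} \<Longrightarrow> 0 < P i"
    and g_pos: "\<And>i j. i \<in> {1..nI} \<Longrightarrow> j \<in> {1..nJ} \<Longrightarrow> 0 < g i j"
    and \<omega>_pos: "\<And>j. j \<in> {1..nJ} \<Longrightarrow> 0 < \<omega> j"
    and assoc: "user_assoc nI nJ x"
begin

abbreviation "obj \<equiv> objective nI nJ x K B g sigma2 \<omega>"
abbreviation "R \<equiv> rate_arg nI g sigma2"
abbreviation "I \<equiv> interference nI g"
abbreviation serves :: "nat \<Rightarrow> nat \<Rightarrow> bool" where
  "serves i j \<equiv> i \<in> {1..nI} \<and> j \<in> {1..nJ} \<and> x i j = 1"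

lemma assoc_zero_or_one: "i \<in> {1..nI} \<Longrightarrow> j \<in> {1..nJ} \<Longrightarrow> x i j = 0 \<or> x i j = 1"
  using assoc unfolding user_assoc_def by blast

lemma assoc_neq_0_iff: "i \<in> {1..nI} \<Longrightarrow> j \<in> {1..nJ} \<Longrightarrow> x i j \<noteq> 0 \<longleftrightarrow> x i j = 1"
  using assoc_zero_or_one by auto

lemma user_has_server:
  assumes "j \<in> {1..nJ}"
  obtains i where "serves i j"
proof -
  have "(\<Sum>i\<in>{1..nI}. x i j) \<noteq> 0"
    using assoc assms unfolding user_assoc_def by simp
  then obtain i where "i \<in> {1..nI}" "x i j \<noteq> 0"
    by (meson sum.neutral)
  with assms assoc_zero_or_one that show ?thesis
    by blast
qed

lemma interference_feasible_nonneg: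
  "feasible nI P d p \<Longrightarrow> j \<in> {1..nJ} \<Longrightarrow> 0 \<le> I d p i j"
  unfolding feasible_def by (intro interference_nonneg) (simp add: g_pos less_imp_le)

lemma objective_finite_iff:
  "obj d p \<noteq> -\<infinity> \<longleftrightarrow> (\<forall>i j. serves i j \<longrightarrow> 0 < R d p i j)"
proof -
  have "obj d p = -\<infinity> \<longleftrightarrow> (\<exists>i\<in>{1..nI}. \<exists>j\<in>{1..nJ}. x i j \<noteq> 0 \<and> R d p i j \<le> 0)"
    unfolding objective_def by simp
  also have "\<dots> \<longleftrightarrow> (\<exists>i j. serves i j \<and> R d p i j \<le> 0)"
    using assoc_neq_0_iff by blast
  finally show ?thesis
    using not_less by blast
qed

definition weighted_log_rate :: "(nat \<Rightarrow> real) \<Rightarrow> (nat \<Rightarrow> real) \<Rightarrow> nat \<Rightarrow> nat \<Rightarrow> real" where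
  "weighted_log_rate d p i j = (if x i j = 0 then 0 else \<omega> j * x i j * log 2 (R d p i j))"

definition log_utility :: "(nat \<Rightarrow> real) \<Rightarrow> (nat \<Rightarrow> real) \<Rightarrow> real" where
  "log_utility d p = (\<Sum>i\<in>{1..nI}. \<Sum>j\<in>{1..nJ}. weighted_log_rate d p i j)"

lemma objective_eq_ereal:
  assumes "\<And>i j. serves i j \<Longrightarrow> 0 < R d p i j"
  shows "obj d p = ereal (log_utility d p + const_C nI nJ x K B \<omega>)"
proof -
  have "\<not> (\<exists>i\<in>{1..nI}. \<exists>j\<in>{1..nJ}. x i j \<noteq> 0 \<and> R d p i j \<le> 0)"
    using assms assoc_neq_0_iff by (meson not_le)
  then show ?thesis
    unfolding objective_def log_utility_def weighted_log_rate_def by (rule if_not_P)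
qed

lemma objective_strict_mono:
  assumes pos: "\<And>i j. serves i j \<Longrightarrow> 0 < R d p i j"
    and le: "\<And>i j. serves i j \<Longrightarrow> R d p i j \<le> R d' p' i j"
    and "serves i0 j0" and lt: "R d p i0 j0 < R d' p' i0 j0"
  shows "obj d p < obj d' p'"
proof -
  let ?W = weighted_log_rate
  have W_le: "?W d p i j \<le> ?W d' p' i j" if "i \<in> {1..nI}" "j \<in> {1..nJ}" for i j
    using assoc_zero_or_one[OF that] pos[of i j] le[of i j] \<omega>_pos[of j] that
    by (auto simp: weighted_log_rate_def)
  have "?W d p i0 j0 < ?W d' p' i0 j0"
    using pos[of i0 j0] lt \<omega>_pos[of j0] \<open>serves i0 j0\<close> by (simp add: weighted_log_rate_def)
  then have "(\<Sum>j\<in>{1..nJ}. ?W d p i0 j) < (\<Sum>j\<in>{1..nJ}. ?W d' p' i0 j)"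
    using W_le \<open>serves i0 j0\<close> by (intro sum_strict_mono_ex1) auto
  then have "log_utility d p < log_utility d' p'"
    unfolding log_utility_def
    using W_le \<open>serves i0 j0\<close> by (intro sum_strict_mono_ex1) (auto intro: sum_mono)
  moreover have "obj d' p' = ereal (log_utility d' p' + const_C nI nJ x K B \<omega>)"
    using pos le by (intro objective_eq_ereal) (meson order_less_le_trans)
  ultimately show ?thesis
    using objective_eq_ereal[OF pos] by simp
qed

lemma optimal_rate_arg_pos:
  assumes opt: "optimal nI nJ x K B g sigma2 \<omega> P d p" and "serves i j"
  shows "0 < R d p i j"
proof -
  have full_load: "feasible nI P (\<lambda>_. 1) P"
    unfolding feasible_def using P_pos by (simp add: less_imp_le order_less_imp_not_eq2)
  have "0 < R (\<lambda>_. 1) P k l" if "serves k l" for k l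
  proof -
    have "0 < I (\<lambda>_. 1) P k l + sigma2"
      using interference_feasible_nonneg[OF full_load] sigma2_pos that by (simp add: add_nonneg_pos)
    then have "0 < sinr nI g sigma2 (\<lambda>_. 1) P k l"
      using P_pos g_pos that by (simp add: sinr_interference)
    then show ?thesis
      by (simp add: rate_arg_def)
  qed
  then have "obj (\<lambda>_. 1) P \<noteq> -\<infinity>"
    by (simp add: objective_finite_iff)
  then have "obj d p \<noteq> -\<infinity>"
    using opt full_load unfolding optimal_def by force
  then show ?thesis
    using \<open>serves i j\<close> by (simp add: objective_finite_iff)
qed

lemma optimal_serving_pos:
  assumes opt: "optimal nI nJ x K B g sigma2 \<omega> P d p" and "serves i j"
  shows "0 < d i" "0 < p i" "0 < sinr nI g sigma2 d p i j"
proof -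
  have feas: "feasible nI P d p"
    using opt unfolding optimal_def by simp
  have box: "0 \<le> d i" "0 \<le> p i" "p i = 0 \<longleftrightarrow> d i = 0"
    using feas \<open>serves i j\<close> unfolding feasible_def by auto
  have "0 \<le> sinr nI g sigma2 d p i j"
    using interference_feasible_nonneg[OF feas, of j i] box sigma2_pos g_pos[of i j] \<open>serves i j\<close>
    unfolding sinr_interference by (simp add: add_nonneg_pos)
  moreover have R: "0 < d i * log 2 (1 + sinr nI g sigma2 d p i j)"
    using optimal_rate_arg_pos[OF assms] by (simp add: rate_arg_def)
  ultimately show "0 < sinr nI g sigma2 d p i j"
    using box(1) by (auto simp: zero_less_mult_iff)
  show "0 < d i"
    using R box(1) by (auto simp: zero_less_mult_iff)
  then show "0 < p i"
    using box by simp
qed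

lemma optimal_load_serving:
  assumes opt: "optimal nI nJ x K B g sigma2 \<omega> P d p" and "serves i j0"
  shows "d i = 1"
proof (rule ccontr)
  assume "d i \<noteq> 1"
  have feas: "feasible nI P d p" and best: "\<And>d' p'. feasible nI P d' p' \<Longrightarrow> obj d' p' \<le> obj d p"
    using opt unfolding optimal_def by auto
  have d_i: "0 < d i" "d i < 1" and p_i: "0 < p i" "p i \<le> P i"
    using optimal_serving_pos[OF opt \<open>serves i j0\<close>] feas \<open>serves i j0\<close> \<open>d i \<noteq> 1\<close>
    unfolding feasible_def by force+
  define d' where "d' = d(i := 1)"
  define p' where "p' = p(i := d i * p i)"
  have "d i * p i \<le> p i"
    using d_i p_i by (intro mult_left_le_one_le) auto
  with p_i have "d i * p i \<le> P i"
    by linarith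
  then have feas': "feasible nI P d' p'"
    unfolding d'_def p'_def using feas d_i p_i by (intro feasible_update) auto
  have I_eq: "I d' p' k j = I d p k j" for k j
    by (rule interference_cong) (simp add: d'_def p'_def)
  have R_eq: "R d' p' k j = R d p k j" if "k \<noteq> i" for k j
    using that by (simp add: rate_arg_def sinr_interference I_eq) (simp add: d'_def p'_def)
  have R_less: "R d p i j < R d' p' i j" if "serves i j" for j
  proof -
    let ?s = "sinr nI g sigma2 d p i j"
    have "R d' p' i j = log 2 (1 + d i * ?s)"
      by (simp add: rate_arg_def sinr_interference I_eq) (simp add: d'_def p'_def mult.assoc)
    then show ?thesis
      using log_one_plus_scaled_gt[of 2 "d i" ?s] d_i optimal_serving_pos(3)[OF opt that]
      by (simp add: rate_arg_def)
  qed
  have R_le: "R d p k j \<le> R d' p' k j" if "serves k j" for k j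
    using R_eq R_less that by (cases "k = i") (auto intro: less_imp_le)
  have "obj d p < obj d' p'"
    using objective_strict_mono[OF optimal_rate_arg_pos[OF opt] R_le \<open>serves i j0\<close>]
      R_less[OF \<open>serves i j0\<close>] by blast
  with best[OF feas'] show False
    by simp
qed

lemma optimal_load_idle:
  assumes opt: "optimal nI nJ x K B g sigma2 \<omega> P d p" and "1 \<le> nJ"
    and i: "i \<in> {1..nI}" and idle: "\<And>j. j \<in> {1..nJ} \<Longrightarrow> x i j = 0"
  shows "d i = 0"
proof (rule ccontr)
  assume "d i \<noteq> 0"
  have feas: "feasible nI P d p" and best: "\<And>d' p'. feasible nI P d' p' \<Longrightarrow> obj d' p' \<le> obj d p"
    using opt unfolding optimal_def by auto
  have dp_i: "0 < d i * p i"
    using feas i \<open>d i \<noteq> 0\<close> unfolding feasible_def by force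
  define d' where "d' = d(i := 0)"
  define p' where "p' = p(i := 0)"
  have feas': "feasible nI P d' p'"
    unfolding d'_def p'_def using feas i P_pos by (intro feasible_update) (auto simp: less_imp_le)
  have R_less: "R d p k j < R d' p' k j" if "serves k j" for k j
  proof -
    have "k \<noteq> i"
      using idle that by auto
    have "0 < d i * p i * g i j"
      using dp_i g_pos i that by simp
    then have "I d' p' k j < I d p k j"
      unfolding d'_def p'_def using interference_switch_off[OF i, of k] \<open>k \<noteq> i\<close> by simp
    moreover have "0 < I d' p' k j + sigma2"
      using interference_feasible_nonneg[OF feas', of j k] sigma2_pos that by simp
    moreover have "0 < p k * g k j"
      using optimal_serving_pos(2)[OF opt that] g_pos that by simp
    ultimately have "sinr nI g sigma2 d p k j < sinr nI g sigma2 d' p' k j"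
      unfolding sinr_interference using \<open>k \<noteq> i\<close>
      by (simp add: d'_def p'_def divide_strict_left_mono)
    then show ?thesis
      using optimal_serving_pos[OF opt that] \<open>k \<noteq> i\<close>
      by (simp add: rate_arg_def d'_def)
  qed
  obtain k where "serves k 1"
    using user_has_server[of 1] \<open>1 \<le> nJ\<close> by auto
  have "obj d p < obj d' p'"
    using objective_strict_mono[OF optimal_rate_arg_pos[OF opt] less_imp_le[OF R_less] \<open>serves k 1\<close>]
      R_less[OF \<open>serves k 1\<close>] by blast
  with best[OF feas'] show False
    by simp
qed

end

theorem lemma1:
  fixes nI nJ :: nat
    and x g :: "nat \<Rightarrow> nat \<Rightarrow> real"
    and K B sigma2 :: real
    and \<omega> P d p :: "nat \<Rightarrow> real"
  assumes "nJ \<ge> 1"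
    and "K > 0" and "B > 0" and "sigma2 > 0"
    and "\<forall>i\<in>{1..nI}. P i > 0"
    and "\<forall>i\<in>{1..nI}. \<forall>j\<in>{1..nJ}. g i j > 0"
    and "\<forall>j\<in>{1..nJ}. \<omega> j > 0"
    and "user_assoc nI nJ x"
    and "optimal nI nJ x K B g sigma2 \<omega> P d p"
  shows "\<forall>i\<in>{1..nI}. d i = (if \<exists>j\<in>{1..nJ}. x i j = 1 then 1 else 0)"
proof
  interpret load_power_problem nI nJ x g K B sigma2 \<omega> P
    using assms(4-8) by unfold_locales auto
  fix i assume i: "i \<in> {1..nI}"
  show "d i = (if \<exists>j\<in>{1..nJ}. x i j = 1 then 1 else 0)"
  proof (cases "\<exists>j\<in>{1..nJ}. x i j = 1")
    case True
    then show ?thesis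
      using optimal_load_serving[OF assms(9)] i by auto
  next
    case False
    then have "x i j = 0" if "j \<in> {1..nJ}" for j
      using assoc_zero_or_one[OF i that] that by auto
    then show ?thesis
      using optimal_load_idle[OF assms(9) assms(1) i] False by simp
  qed
qed

end
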